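(* Let $c>0$, $b>0$, $t_0\in\mathbb{R}$, $J=[t_0,+\infty)$, $f\in L^\infty(J)$, and let $g\in C^1(\mathbb{R})$ satisfy $g(0)=0$ and $g'(s)\ge b$ for all $s\in\mathbb{R}$. Let $u,v$ be two solutions on $J$ of $$w''(t)+c\,w'(t)+g(w(t))=f(t),$$ and set $$M=\max\Big\{\limsup_{t\to+\infty}|u(t)|,\ \limsup_{t\to+\infty}|v(t)|\Big\}<\infty,\qquad A=\sup_{s\in[-M,M]}\big(g'(s)-b\big).$$ If $$A<c\,\max\{c,\,2\sqrt b\},$$ then there exist constants $\delta>0$ and $K>0$ such that $$|u(t)-v(t)|+|u'(t)-v'(t)|\le K e^{-\delta t}\quad\text{for all } t\in J.$$
   Context: Solutions are understood as functions in $W^{2,\infty}_{\mathrm{loc}}(J)$ satisfying the equation almost everywhere. (Under the stated hypotheses all solutions are bounded on $J$, so $M$ is finite.) *)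

theory Defs
  imports "HOL-Analysis.Analysis"
begin

text \<open>A solution on J = [t0,+inf) of w'' + c w' + g(w) = f in the class W^{2,inf}_loc(J):
  w is differentiable on J with derivative w1, w1 is Lipschitz on every compact
  subinterval [t0,T] (i.e. w1 in W^{1,inf}_loc), and for almost every t in J,
  w1 is differentiable at t with w1'(t) = f t - c w1 t - g (w t).\<close>
definition is_solution ::
  "real \<Rightarrow> (real \<Rightarrow> real) \<Rightarrow> (real \<Rightarrow> real) \<Rightarrow> real \<Rightarrow> (real \<Rightarrow> real) \<Rightarrow> (real \<Rightarrow> real) \<Rightarrow> bool"
  where "is_solution c g f t0 w w1 \<longleftrightarrow>
    (\<forall>t\<ge>t0. (w has_real_derivative w1 t) (at t within {t0..})) \<and>
    (\<forall>T\<ge>t0. \<exists>L. L-lipschitz_on {t0..T} w1) \<and>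
    (AE t in lborel. t \<ge> t0 \<longrightarrow>
        (w1 has_real_derivative (f t - c * w1 t - g (w t))) (at t))"

definition Linf_on :: "real set \<Rightarrow> (real \<Rightarrow> real) \<Rightarrow> bool"
  where "Linf_on J f \<longleftrightarrow> f \<in> borel_measurable (restrict_space lborel J) \<and>
    (\<exists>B. AE t in lborel. t \<in> J \<longrightarrow> \<bar>f t\<bar> \<le> B)"

end

theory Submission
  imports Defs
begin

text \<open>Each solution is bounded: the energy p^2 + c w p + c^2/2 w^2 + 2 G(w), with G a primitive of g,
  decreases whenever the state (w, p) leaves a fixed box. So M is finite, and eventually both solutions stay in
  [-M - e, M + e], where g' < b + A1 for some A < A1 < c max(c, 2 sqrt b), and the differences
  W = u - v, P = u' - v' satisfy P' = - c P - h W with b \<le> h(t) \<le> b + A1. The bound on A1 is exactly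
  what makes c P^2 - (K0 - 2 h) P W + c h W^2 uniformly positive definite in h for a suitable K0, so that
  Q = P^2 + c P W + (K0 + c^2)/2 W^2, whose derivative is minus that form, decays exponentially.
  As solutions are only W^{2,\<infinity>}, derivatives exist merely almost everywhere; the mean value
  arguments are replaced by a comparison principle for Lipschitz functions, which map null sets
  to null sets.\<close>

lemma negligible_of_AE_lborel:
  assumes "AE x in lborel. P x"
  obtains N where "negligible N" "\<And>x. x \<notin> N \<Longrightarrow> P x"
  using eventually_ae_filter_negligible[THEN iffD1, OF AE_completion[OF assms]] by blast

lemma real_MVT_between:
  fixes F F' :: "real \<Rightarrow> real"
  assumes "\<And>s. (F has_real_derivative F' s) (at s)"
  obtains z where "min x y \<le> z" "z \<le> max x y" "F x - F y = F' z * (x - y)"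
proof -
  have mvt: "\<exists>z. a < z \<and> z < b \<and> F b - F a = (b - a) * F' z" if "a < b" for a b
    using MVT2[OF that, of F F'] assms by auto
  consider "x = y" | "x < y" | "y < x" by linarith
  then show ?thesis
  proof cases
    case 1
    then show ?thesis by (intro that[of x]) auto
  next
    case 2
    then obtain z where "x < z" "z < y" "F y - F x = (y - x) * F' z" using mvt by blast
    then show ?thesis by (intro that[of z]) (auto simp: algebra_simps)
  next
    case 3
    then obtain z where "y < z" "z < x" "F x - F y = (x - y) * F' z" using mvt by blast
    then show ?thesis by (intro that[of z]) (auto simp: algebra_simps)
  qed
qed

lemma lipschitz_on_of_derivative_bound:
  fixes f f' :: "real \<Rightarrow> real"
  assumes "convex S" "\<And>x. x \<in> S \<Longrightarrow> (f has_real_derivative f' x) (at x within S)"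
    and "\<And>x. x \<in> S \<Longrightarrow> \<bar>f' x\<bar> \<le> B" "B \<ge> 0"
  shows "B-lipschitz_on S f"
  using field_differentiable_bound[OF assms(1,2)] assms(3,4)
  by (intro lipschitz_onI) (auto simp: dist_real_def)

definition lipschitzian :: "real set \<Rightarrow> (real \<Rightarrow> real) \<Rightarrow> bool"
  where "lipschitzian S f \<longleftrightarrow> (\<exists>L. L-lipschitz_on S f)"

lemma lipschitzian_const: "lipschitzian S (\<lambda>x. k)"
  unfolding lipschitzian_def using lipschitz_on_constant by blast

lemma lipschitzian_ident: "lipschitzian S (\<lambda>x. x)"
  unfolding lipschitzian_def using lipschitz_on_id by blast

lemma lipschitzian_add: "lipschitzian S f \<Longrightarrow> lipschitzian S g \<Longrightarrow> lipschitzian S (\<lambda>x. f x + g x)"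
  unfolding lipschitzian_def using lipschitz_on_add by blast

lemma lipschitzian_diff: "lipschitzian S f \<Longrightarrow> lipschitzian S g \<Longrightarrow> lipschitzian S (\<lambda>x. f x - g x)"
  unfolding lipschitzian_def using lipschitz_on_diff by blast

lemma lipschitzian_subset: "lipschitzian S f \<Longrightarrow> T \<subseteq> S \<Longrightarrow> lipschitzian T f"
  unfolding lipschitzian_def using lipschitz_on_subset by blast

lemma lipschitzian_bounded:
  assumes "lipschitzian S f" "bounded S"
  obtains B where "B \<ge> 0" "\<And>x. x \<in> S \<Longrightarrow> \<bar>f x\<bar> \<le> B"
proof (cases "S = {}")
  case False
  then obtain x0 where x0: "x0 \<in> S" by blast
  obtain L where L: "L-lipschitz_on S f" using assms(1) lipschitzian_def by blast
  obtain R where R: "\<And>x. x \<in> S \<Longrightarrow> dist x0 x \<le> R" using assms(2) bounded_any_center by blast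
  have "\<bar>f x\<bar> \<le> \<bar>f x0\<bar> + L * R" if "x \<in> S" for x
  proof -
    have "\<bar>f x0 - f x\<bar> \<le> L * \<bar>x0 - x\<bar>"
      using lipschitz_onD[OF L x0 that] by (simp add: dist_real_def)
    also have "\<dots> \<le> L * R"
      using R[OF that] lipschitz_on_nonneg[OF L] by (simp add: dist_real_def mult_left_mono)
    finally show ?thesis by linarith
  qed
  then show ?thesis by (intro that[of "max 0 (\<bar>f x0\<bar> + L * R)"]) force+
qed (rule that[of 0]; simp)

lemma lipschitzian_mult:
  assumes f: "lipschitzian S f" and g: "lipschitzian S g" and S: "bounded S"
  shows "lipschitzian S (\<lambda>x. f x * g x)"
proof -
  obtain L1 where L1: "L1-lipschitz_on S f" using f lipschitzian_def by blast
  obtain L2 where L2: "L2-lipschitz_on S g" using g lipschitzian_def by blast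
  obtain B1 where B1: "B1 \<ge> 0" "\<And>x. x \<in> S \<Longrightarrow> \<bar>f x\<bar> \<le> B1"
    using lipschitzian_bounded[OF f S] by blast
  obtain B2 where B2: "B2 \<ge> 0" "\<And>x. x \<in> S \<Longrightarrow> \<bar>g x\<bar> \<le> B2"
    using lipschitzian_bounded[OF g S] by blast
  have "(B1 * L2 + B2 * L1)-lipschitz_on S (\<lambda>x. f x * g x)"
  proof (rule lipschitz_onI)
    fix x y assume x: "x \<in> S" and y: "y \<in> S"
    have "f x * g x - f y * g y = f x * (g x - g y) + g y * (f x - f y)"
      by (simp add: algebra_simps)
    moreover have "\<bar>f x * (g x - g y)\<bar> \<le> B1 * (L2 * \<bar>x - y\<bar>)"
      unfolding abs_mult using B1 x lipschitz_onD[OF L2 x y]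
      by (intro mult_mono) (auto simp: dist_real_def)
    moreover have "\<bar>g y * (f x - f y)\<bar> \<le> B2 * (L1 * \<bar>x - y\<bar>)"
      unfolding abs_mult using B2 y lipschitz_onD[OF L1 x y]
      by (intro mult_mono) (auto simp: dist_real_def)
    ultimately show "dist (f x * g x) (f y * g y) \<le> (B1 * L2 + B2 * L1) * dist x y"
      by (simp add: dist_real_def algebra_simps)
  qed (use B1 B2 lipschitz_on_nonneg[OF L1] lipschitz_on_nonneg[OF L2] in simp)
  then show ?thesis unfolding lipschitzian_def by blast
qed

lemma lipschitzian_compose_C1:
  fixes h h' :: "real \<Rightarrow> real"
  assumes f: "lipschitzian S f" and S: "bounded S"
    and h: "\<And>s. (h has_real_derivative h' s) (at s)" and h': "continuous_on UNIV h'"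
  shows "lipschitzian S (\<lambda>x. h (f x))"
proof -
  obtain L where L: "L-lipschitz_on S f" using f lipschitzian_def by blast
  obtain B where "\<And>x. x \<in> S \<Longrightarrow> \<bar>f x\<bar> \<le> B"
    using lipschitzian_bounded[OF f S] by blast
  then have B: "f ` S \<subseteq> {-B..B}" by (force simp: abs_le_iff)
  obtain K where K: "\<And>s. s \<in> {-B..B} \<Longrightarrow> \<bar>h' s\<bar> \<le> K"
    using compact_imp_bounded[OF compact_continuous_image[OF continuous_on_subset[OF h'] compact_Icc]]
    unfolding bounded_real by blast
  have "(max K 0)-lipschitz_on {-B..B} h"
    by (rule lipschitz_on_of_derivative_bound)
       (use K in \<open>auto intro: has_field_derivative_at_within[OF h] le_max_iff_disj[THEN iffD2]\<close>)
  then have "(max K 0)-lipschitz_on (f ` S) h" using B by (rule lipschitz_on_subset)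
  from lipschitz_on_compose2[OF L this] show ?thesis unfolding lipschitzian_def by blast
qed

lemma lipschitzian_negligible_image:
  assumes "lipschitzian S f" "negligible N"
  shows "negligible (f ` (N \<inter> S))"
proof -
  obtain L where L: "L-lipschitz_on S f" using assms lipschitzian_def by blast
  show ?thesis
  proof (rule negligible_locally_Lipschitz_image)
    show "negligible (N \<inter> S)" using assms(2) negligible_subset by blast
    fix x :: real assume x: "x \<in> N \<inter> S"
    show "\<exists>T B. open T \<and> x \<in> T \<and> (\<forall>y\<in>N \<inter> S \<inter> T. norm (f y - f x) \<le> B * norm (y - x))"
      using lipschitz_onD[OF L] x
      by (intro exI[of _ UNIV] exI[of _ L]) (auto simp: dist_real_def)
  qed simp
qed

subsection \<open>A comparison principle\<close>

text \<open>Suppose the claim fails. Take a value y between max (\<phi> a) L and \<phi> b that is not attained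
  on the exceptional set, and let t be the last time in [a, b] with \<phi> t = y. Then \<phi>' t < 0 forces
  \<phi> < y just after t, and the intermediate value theorem gives a later time at level y.\<close>
lemma lipschitzian_le_max_of_derivative_neg:
  fixes \<phi> :: "real \<Rightarrow> real"
  assumes ab: "a \<le> b" and lip: "lipschitzian {a..b} \<phi>" and N: "negligible N"
    and der: "\<And>t. t \<in> {a<..<b} \<Longrightarrow> t \<notin> N \<Longrightarrow> \<phi> t > L \<Longrightarrow>
               \<exists>D<0. (\<phi> has_real_derivative D) (at t)"
  shows "\<phi> b \<le> max (\<phi> a) L"
proof (rule ccontr)
  assume "\<not> ?thesis"
  then have gt: "max (\<phi> a) L < \<phi> b" by (simp add: not_le del: max_less_iff_conj)
  have cont: "continuous_on {a..b} \<phi>"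
    using lip lipschitz_on_continuous_on unfolding lipschitzian_def by blast
  have "negligible (\<phi> ` (insert a N \<inter> {a..b}))"
    using lipschitzian_negligible_image[OF lip] N by simp
  moreover have "\<not> negligible {max (\<phi> a) L<..<\<phi> b}"
    using negligible_interval(2)[of "max (\<phi> a) L" "\<phi> b"] gt by simp
  ultimately have "\<not> {max (\<phi> a) L<..<\<phi> b} \<subseteq> \<phi> ` (insert a N \<inter> {a..b})"
    using negligible_subset by blast
  then obtain y where y: "max (\<phi> a) L < y" "y < \<phi> b" "y \<notin> \<phi> ` (insert a N \<inter> {a..b})"
    by (meson greaterThanLessThan_iff subsetI)
  define Z where "Z = {t \<in> {a..b}. \<phi> t = y}"
  have "closed Z"
    unfolding Z_def by (rule continuous_closed_preimage_constant[OF cont]) simp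
  moreover have "Z \<noteq> {}"
    using IVT'[of \<phi> a y b] y ab cont unfolding Z_def by auto
  moreover have bdd: "bdd_above Z" unfolding Z_def by (auto intro: bdd_aboveI[of _ b])
  ultimately have "Sup Z \<in> Z" by (intro closed_contains_Sup)
  then obtain t where t: "t = Sup Z" "a \<le> t" "t \<le> b" "\<phi> t = y" unfolding Z_def by auto
  then have "t \<in> {a<..<b}" "t \<notin> N" using y by (auto simp: order.order_iff_strict)
  then obtain D where D: "D < 0" "(\<phi> has_real_derivative D) (at t)"
    using der y t by fastforce
  obtain d where d: "d > 0" "\<And>h. h > 0 \<Longrightarrow> h < d \<Longrightarrow> \<phi> (t + h) < \<phi> t"
    using DERIV_neg_dec_right[OF D(2) D(1)] by blast
  define h where "h = min (d/2) ((b - t)/2)"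
  have h: "0 < h" "h < d" "t + h \<le> b" using d \<open>t \<in> {a<..<b}\<close> by (auto simp: h_def min_def field_simps)
  have "\<phi> (t + h) < y" using d(2)[OF h(1,2)] t by simp
  moreover have "continuous_on {t + h..b} \<phi>"
    using cont t h by (auto intro: continuous_on_subset)
  ultimately obtain s where s: "t + h \<le> s" "s \<le> b" "\<phi> s = y"
    using IVT'[of \<phi> "t + h" y b] y h by auto
  then have "s \<in> Z" using t h unfolding Z_def by auto
  then have "s \<le> t" unfolding t(1) by (rule cSup_upper[OF _ bdd])
  then show False using s h by auto
qed

lemma solution_has_derivative_within:
  assumes "is_solution c g f t0 u u'" "t \<ge> t0"
  shows "(u has_real_derivative u' t) (at t within {t0..})"
  using assms unfolding is_solution_def by blast

lemma solution_has_derivative: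
  assumes "is_solution c g f t0 u u'" "t > t0"
  shows "(u has_real_derivative u' t) (at t)"
proof -
  have "(u has_real_derivative u' t) (at t within {t0..})"
    using assms by (simp add: solution_has_derivative_within)
  moreover have "at t within {t0..} = at t" using assms(2) by (intro at_within_interior) auto
  ultimately show ?thesis by simp
qed

lemma solution_lipschitzian_derivative:
  assumes "is_solution c g f t0 u u'"
  shows "lipschitzian {t0..T} u'"
proof (cases "t0 \<le> T")
  case True
  have "\<forall>T\<ge>t0. \<exists>L. L-lipschitz_on {t0..T} u'" using assms unfolding is_solution_def by (elim conjE)
  with True show ?thesis unfolding lipschitzian_def by blast
next
  case False
  then show ?thesis unfolding lipschitzian_def by (intro exI[of _ 0]) simp
qed

lemma solution_lipschitzian:
  assumes sol: "is_solution c g f t0 u u'"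
  shows "lipschitzian {t0..T} u"
proof -
  obtain K where K: "K \<ge> 0" "\<And>t. t \<in> {t0..T} \<Longrightarrow> \<bar>u' t\<bar> \<le> K"
    using lipschitzian_bounded[OF solution_lipschitzian_derivative[OF sol] bounded_closed_interval]
    by blast
  have "(u has_real_derivative u' t) (at t within {t0..T})" if "t \<in> {t0..T}" for t
    using that by (intro DERIV_subset[OF solution_has_derivative_within[OF sol]]) auto
  then have "K-lipschitz_on {t0..T} u"
    by (rule lipschitz_on_of_derivative_bound[OF convex_real_interval(5) _ K(2) K(1)])
  then show ?thesis unfolding lipschitzian_def by blast
qed

lemma solution_second_derivative:
  assumes "is_solution c g f t0 u u'"
  obtains N where "negligible N"
    "\<And>t. t > t0 \<Longrightarrow> t \<notin> N \<Longrightarrow> (u' has_real_derivative f t - c * u' t - g (u t)) (at t)"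
proof -
  have "AE t in lborel. t \<ge> t0 \<longrightarrow> (u' has_real_derivative f t - c * u' t - g (u t)) (at t)"
    using assms unfolding is_solution_def by (elim conjE)
  then obtain N where "negligible N"
    "\<And>t. t \<notin> N \<Longrightarrow> t \<ge> t0 \<longrightarrow> (u' has_real_derivative f t - c * u' t - g (u t)) (at t)"
    by (rule negligible_of_AE_lborel) blast
  then show ?thesis using that by auto
qed

lemma Linf_on_bound_off_negligible:
  assumes "Linf_on {t0..} f"
  obtains F N where "F \<ge> 0" "negligible N" "\<And>t. t \<ge> t0 \<Longrightarrow> t \<notin> N \<Longrightarrow> \<bar>f t\<bar> \<le> F"
proof -
  obtain F0 where "AE t in lborel. t \<in> {t0..} \<longrightarrow> \<bar>f t\<bar> \<le> F0"
    using assms unfolding Linf_on_def by (elim conjE exE)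
  then obtain N where "negligible N" "\<And>t. t \<notin> N \<Longrightarrow> t \<in> {t0..} \<longrightarrow> \<bar>f t\<bar> \<le> F0"
    by (rule negligible_of_AE_lborel) blast
  then show ?thesis by (intro that[of "max F0 0" N]) force+
qed

subsection \<open>The energy estimate\<close>

lemma slope_ge_of_derivative_ge:
  fixes g g' :: "real \<Rightarrow> real"
  assumes "\<And>s. (g has_real_derivative g' s) (at s)" "g 0 = 0" "\<And>s. g' s \<ge> b"
  obtains k where "k \<ge> b" "g x = k * x"
proof -
  obtain z where "g x - g 0 = g' z * (x - 0)" using real_MVT_between[OF assms(1)] by blast
  then show ?thesis using that[of "g' z"] assms(2,3) by simp
qed

lemma mult_ge_square_of_derivative_ge:
  fixes g g' :: "real \<Rightarrow> real"
  assumes "\<And>s. (g has_real_derivative g' s) (at s)" "g 0 = 0" "\<And>s. g' s \<ge> b"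
  shows "w * g w \<ge> b * w\<^sup>2"
proof -
  obtain k where "k \<ge> b" "g w = k * w" using slope_ge_of_derivative_ge[OF assms] by blast
  then show ?thesis by (simp add: power2_eq_square mult_right_mono algebra_simps)
qed

lemma exists_nonneg_primitive:
  fixes g :: "real \<Rightarrow> real"
  assumes g: "continuous_on UNIV g" and slope: "\<And>x. \<exists>k\<ge>0. g x = k * x"
  obtains G where "\<And>s. (G has_real_derivative g s) (at s)" "\<And>s. G s \<ge> 0"
proof
  define G where "G s = (LBINT y=ereal 0..ereal s. g y)" for s
  show G': "(G has_real_derivative g s) (at s)" for s
  proof -
    have "(G has_vector_derivative g s) (at s within {-\<bar>s\<bar>-1..\<bar>s\<bar>+1})"
      unfolding G_def by (rule interval_integral_FTC2) (auto intro: continuous_on_subset[OF g])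
    moreover have "at s within {-\<bar>s\<bar>-1..\<bar>s\<bar>+1} = at s" by (intro at_within_interior) auto
    ultimately show ?thesis by (simp add: has_real_derivative_iff_has_vector_derivative)
  qed
  fix s
  obtain z where z: "min s 0 \<le> z" "z \<le> max s 0" "G s - G 0 = g z * (s - 0)"
    using real_MVT_between[OF G'] by blast
  obtain k where "k \<ge> 0" "g z = k * z" using slope by blast
  moreover have "z * s \<ge> 0" using z by (cases "s \<ge> 0") (auto simp: mult_nonneg_nonneg mult_nonpos_nonpos)
  moreover have "G 0 = 0" by (simp add: G_def)
  ultimately show "G s \<ge> 0" using z(3) by (simp add: algebra_simps)
qed

text \<open>The parameter G stands for a primitive of g. Damping acts on p only; the cross term c w p is
  what makes the energy decrease also when w is large.\<close>
definition energy :: "real \<Rightarrow> (real \<Rightarrow> real) \<Rightarrow> real \<Rightarrow> real \<Rightarrow> real"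
  where "energy c G w p = p\<^sup>2 + c * w * p + c\<^sup>2 / 2 * w\<^sup>2 + 2 * G w"

lemma abs_le_of_energy_le:
  fixes c E :: real
  assumes c: "c > 0" and G: "G w \<ge> 0" and E: "energy c G w p \<le> E"
  shows "\<bar>w\<bar> \<le> 1 + 4 * E / c\<^sup>2" "\<bar>p\<bar> \<le> 2 + 2 * E"
proof -
  have abs_le: "\<bar>x\<bar> \<le> 1 + x\<^sup>2" for x :: real
    using zero_le_power2[of "\<bar>x\<bar> - 1"] by (simp add: power2_eq_square algebra_simps)
  have "energy c G w p = (p + c * w / 2)\<^sup>2 + (c * w / 2)\<^sup>2 + 2 * G w"
    unfolding energy_def by (simp add: power2_eq_square algebra_simps)
  then have bounds: "(c * w / 2)\<^sup>2 \<le> E" "(p + c * w / 2)\<^sup>2 \<le> E"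
    using E G zero_le_power2[of "p + c * w / 2"] zero_le_power2[of "c * w / 2"] by linarith+
  moreover have "(c * w / 2)\<^sup>2 = c\<^sup>2 * w\<^sup>2 / 4" by (simp add: power2_eq_square)
  ultimately have "c\<^sup>2 * w\<^sup>2 \<le> 4 * E" by linarith
  then have "w\<^sup>2 \<le> 4 * E / c\<^sup>2" using c by (simp add: field_simps)
  then show "\<bar>w\<bar> \<le> 1 + 4 * E / c\<^sup>2" using abs_le[of w] by linarith
  have "\<bar>p\<bar> \<le> \<bar>p + c * w / 2\<bar> + \<bar>c * w / 2\<bar>" by linarith
  then show "\<bar>p\<bar> \<le> 2 + 2 * E"
    using abs_le[of "p + c * w / 2"] abs_le[of "c * w / 2"] bounds by linarith
qed

lemma energy_le_on_box:
  fixes c r :: real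
  assumes c: "c > 0" and r: "\<bar>w\<bar> \<le> r" "\<bar>p\<bar> \<le> r" and G: "G w \<le> B"
  shows "energy c G w p \<le> (1 + c + c\<^sup>2 / 2) * r\<^sup>2 + 2 * B"
proof -
  have prod_le: "x * y \<le> r * r" if "\<bar>x\<bar> \<le> r" "\<bar>y\<bar> \<le> r" for x y :: real
  proof -
    have "\<bar>x * y\<bar> \<le> r * r" unfolding abs_mult using that by (intro mult_mono) auto
    then show ?thesis by (rule order_trans[OF abs_ge_self])
  qed
  have "p * p \<le> r * r" "w * w \<le> r * r" "w * p \<le> r * r" using prod_le r by blast+
  then have "c * (w * p) \<le> c * (r * r)" "c\<^sup>2 / 2 * (w * w) \<le> c\<^sup>2 / 2 * (r * r)"
    using c by (auto intro: mult_left_mono)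
  then show ?thesis using \<open>p * p \<le> r * r\<close> G
    unfolding energy_def by (simp add: power2_eq_square algebra_simps)
qed

lemma abs_le_of_dissipation_nonneg:
  fixes c b F p w gw fv :: real
  assumes c: "c > 0" and b: "b > 0" and F: "F \<ge> 0" and fv: "\<bar>fv\<bar> \<le> F"
    and wg: "w * gw \<ge> b * w\<^sup>2"
    and D: "- c * p\<^sup>2 - c * w * gw + (2 * p + c * w) * fv \<ge> 0"
  shows "\<bar>p\<bar> \<le> 2 * (2 + c) * F / min c (c * b) \<and> \<bar>w\<bar> \<le> 2 * (2 + c) * F / min c (c * b)"
proof -
  define m where "m = min c (c * b)"
  have m: "m > 0" using c b by (simp add: m_def)
  define s where "s = \<bar>p\<bar> + \<bar>w\<bar>"
  have "(2 * p + c * w) * fv \<le> \<bar>2 * p + c * w\<bar> * \<bar>fv\<bar>" by (metis abs_ge_self abs_mult)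
  also have "\<dots> \<le> (2 * \<bar>p\<bar> + c * \<bar>w\<bar>) * F"
    using c fv by (intro mult_mono) (auto simp: abs_mult intro: order_trans[OF abs_triangle_ineq])
  also have "\<dots> \<le> (2 + c) * F * s"
    unfolding s_def using c F by (simp add: algebra_simps mult_right_mono)
  moreover have "c * b * w\<^sup>2 \<le> c * w * gw"
    using mult_left_mono[OF wg, of c] c by (simp add: mult.assoc)
  ultimately have "c * p\<^sup>2 + c * b * w\<^sup>2 \<le> (2 + c) * F * s" using D by linarith
  moreover have "m * p\<^sup>2 \<le> c * p\<^sup>2" "m * w\<^sup>2 \<le> c * b * w\<^sup>2" by (simp_all add: m_def mult_right_mono)
  ultimately have "m * (p\<^sup>2 + w\<^sup>2) \<le> (2 + c) * F * s" by (simp add: algebra_simps)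
  moreover have "s\<^sup>2 \<le> 2 * (p\<^sup>2 + w\<^sup>2)"
    unfolding s_def using zero_le_power2[of "\<bar>p\<bar> - \<bar>w\<bar>"] by (simp add: power2_eq_square algebra_simps)
  ultimately have "m * s\<^sup>2 \<le> 2 * ((2 + c) * F * s)"
    using mult_left_mono[of "s\<^sup>2" "2 * (p\<^sup>2 + w\<^sup>2)" m] m by linarith
  then have "s * (m * s) \<le> s * (2 * (2 + c) * F)" by (simp add: power2_eq_square algebra_simps)
  moreover have "s \<ge> 0" unfolding s_def by simp
  ultimately have "m * s \<le> 2 * (2 + c) * F" using F c
    by (cases "s = 0") (simp_all add: mult_le_cancel_left)
  then have "s \<le> 2 * (2 + c) * F / m" using m by (simp add: field_simps)
  then show ?thesis unfolding s_def m_def by auto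
qed

lemma energy_has_derivative:
  assumes u: "(u has_real_derivative u' t) (at t)"
    and u': "(u' has_real_derivative f t - c * u' t - g (u t)) (at t)"
    and G: "(G has_real_derivative g (u t)) (at (u t))"
  shows "((\<lambda>t. energy c G (u t) (u' t)) has_real_derivative
           - c * (u' t)\<^sup>2 - c * u t * g (u t) + (2 * u' t + c * u t) * f t) (at t)"
  unfolding energy_def
  by (rule derivative_eq_intros u u' DERIV_chain2[OF G u] refl)+
     (simp add: algebra_simps power2_eq_square)

lemma solution_energy_lipschitzian:
  assumes sol: "is_solution c g f t0 u u'"
    and G: "\<And>s. (G has_real_derivative g s) (at s)" "continuous_on UNIV g"
  shows "lipschitzian {t0..T} (\<lambda>t. energy c G (u t) (u' t))"
  unfolding energy_def power2_eq_square
  by (intro lipschitzian_add lipschitzian_mult lipschitzian_const bounded_closed_interval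
      solution_lipschitzian[OF sol] solution_lipschitzian_derivative[OF sol]
      lipschitzian_compose_C1[OF _ _ G])

lemma solution_energy_bounded:
  fixes c b t0 :: real and f g g' u u' :: "real \<Rightarrow> real"
  assumes c: "c > 0" and b: "b > 0" and f: "Linf_on {t0..} f"
    and g: "\<And>s. (g has_real_derivative g' s) (at s)" "g 0 = 0" "\<And>s. g' s \<ge> b"
    and G: "\<And>s. (G has_real_derivative g s) (at s)"
    and sol: "is_solution c g f t0 u u'"
  obtains E where "\<And>t. t \<ge> t0 \<Longrightarrow> energy c G (u t) (u' t) \<le> E"
proof -
  obtain F Nf where F: "F \<ge> 0" "negligible Nf" "\<And>t. t \<ge> t0 \<Longrightarrow> t \<notin> Nf \<Longrightarrow> \<bar>f t\<bar> \<le> F"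
    using Linf_on_bound_off_negligible[OF f] by blast
  obtain Nu where Nu: "negligible Nu"
    "\<And>t. t > t0 \<Longrightarrow> t \<notin> Nu \<Longrightarrow> (u' has_real_derivative f t - c * u' t - g (u t)) (at t)"
    using solution_second_derivative[OF sol] by blast
  have gc: "continuous_on UNIV g"
    by (intro continuous_at_imp_continuous_on ballI DERIV_isCont[OF g(1)])
  define r where "r = 2 * (2 + c) * F / min c (c * b)"
  have "bounded (G ` {-r..r})"
    by (intro compact_imp_bounded compact_continuous_image compact_Icc
        continuous_at_imp_continuous_on ballI DERIV_isCont[OF G])
  then obtain B where B: "\<And>s. s \<in> {-r..r} \<Longrightarrow> \<bar>G s\<bar> \<le> B"
    unfolding bounded_real by blast
  define L where "L = (1 + c + c\<^sup>2 / 2) * r\<^sup>2 + 2 * B"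
  define V where "V t = energy c G (u t) (u' t)" for t
  have "V t \<le> max (V t0) L" if "t \<ge> t0" for t
  proof (rule lipschitzian_le_max_of_derivative_neg[OF that _ negligible_Un[OF F(2) Nu(1)]])
    show "lipschitzian {t0..t} V" unfolding V_def by (rule solution_energy_lipschitzian[OF sol G gc])
    fix s assume s: "s \<in> {t0<..<t}" "s \<notin> Nf \<union> Nu" "L < V s"
    have V': "(V has_real_derivative
        - c * (u' s)\<^sup>2 - c * u s * g (u s) + (2 * u' s + c * u s) * f s) (at s)"
      unfolding V_def using s Nu(2) solution_has_derivative[OF sol] G by (intro energy_has_derivative) auto
    have "- c * (u' s)\<^sup>2 - c * u s * g (u s) + (2 * u' s + c * u s) * f s < 0"
    proof (rule ccontr)
      assume "\<not> ?thesis"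
      then have "\<bar>u' s\<bar> \<le> r \<and> \<bar>u s\<bar> \<le> r"
        unfolding r_def using s by (intro abs_le_of_dissipation_nonneg[OF c b F(1) F(3)[of s] mult_ge_square_of_derivative_ge[OF g]]) auto
      then have "V s \<le> L" unfolding V_def L_def
        using B[of "u s"] by (intro energy_le_on_box[OF c]) (auto simp: abs_le_iff)
      then show False using s by simp
    qed
    then show "\<exists>D<0. (V has_real_derivative D) (at s)" using V' by blast
  qed
  then show ?thesis using that unfolding V_def by blast
qed

lemma solution_bounded:
  fixes c b t0 :: real and f g g' u u' :: "real \<Rightarrow> real"
  assumes c: "c > 0" and b: "b > 0" and f: "Linf_on {t0..} f"
    and g: "\<And>s. (g has_real_derivative g' s) (at s)" "g 0 = 0" "\<And>s. g' s \<ge> b"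
    and sol: "is_solution c g f t0 u u'"
  obtains B where "\<And>t. t \<ge> t0 \<Longrightarrow> \<bar>u t\<bar> \<le> B \<and> \<bar>u' t\<bar> \<le> B"
proof -
  have gc: "continuous_on UNIV g"
    by (intro continuous_at_imp_continuous_on ballI DERIV_isCont[OF g(1)])
  have "\<exists>k\<ge>0. g x = k * x" for x
  proof -
    obtain k where "k \<ge> b" "g x = k * x" using slope_ge_of_derivative_ge[OF g] by blast
    then show ?thesis using b by (intro exI[of _ k]) simp
  qed
  then obtain G where G: "\<And>s. (G has_real_derivative g s) (at s)" "\<And>s. G s \<ge> 0"
    using exists_nonneg_primitive[OF gc] by blast
  obtain E where E: "\<And>t. t \<ge> t0 \<Longrightarrow> energy c G (u t) (u' t) \<le> E"
    using solution_energy_bounded[OF c b f g G(1) sol] by blast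
  show ?thesis
    using abs_le_of_energy_le[OF c G(2) E] by (intro that[of "max (1 + 4 * E / c\<^sup>2) (2 + 2 * E)"]) force
qed

lemma quadratic_form_nonneg:
  fixes a e d x y :: real
  assumes "a > 0" "e\<^sup>2 \<le> 4 * a * d"
  shows "0 \<le> a * x\<^sup>2 + e * x * y + d * y\<^sup>2"
proof -
  have "4 * a * (a * x\<^sup>2 + e * x * y + d * y\<^sup>2) = (2 * a * x + e * y)\<^sup>2 + (4 * a * d - e\<^sup>2) * y\<^sup>2"
    by (simp add: power2_eq_square algebra_simps)
  also have "\<dots> \<ge> 0" using assms by simp
  finally have "0 \<le> (4 * a) * (a * x\<^sup>2 + e * x * y + d * y\<^sup>2)" by simp
  then show ?thesis using assms(1) by (simp add: zero_le_mult_iff)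
qed

lemma discriminant_nonpos_between:
  fixes K0 c \<gamma> h h1 h2 :: real
  defines "E \<equiv> \<lambda>h. (K0 - 2 * h)\<^sup>2 - 4 * (c - \<gamma>) * (c * h - \<gamma>)"
  assumes "h1 \<le> h" "h \<le> h2" "E h1 \<le> 0" "E h2 \<le> 0"
  shows "E h \<le> 0"
proof (cases "h1 = h2")
  case True then show ?thesis using assms by auto
next
  case False
  then have d: "h2 - h1 > 0" using assms by auto
  have id: "E h * (h2 - h1) = (h2 - h) * E h1 + (h - h1) * E h2 + 4 * (h - h1) * (h - h2) * (h2 - h1)"
    unfolding E_def by (simp add: power2_eq_square algebra_simps)
  have "(h2 - h) * E h1 \<le> 0" using assms by (simp add: mult_nonneg_nonpos)
  moreover have "(h - h1) * E h2 \<le> 0" using assms by (simp add: mult_nonneg_nonpos)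
  moreover have "(h - h1) * (h - h2) \<le> 0" using assms by (simp add: mult_nonneg_nonpos)
  then have X: "(h - h1) * (h - h2) * (h2 - h1) \<le> 0"
    using mult_nonpos_nonneg[of "(h - h1) * (h - h2)" "h2 - h1"] d by simp
  have "4 * (h - h1) * (h - h2) * (h2 - h1) = 4 * ((h - h1) * (h - h2) * (h2 - h1))" by (simp add: mult.assoc)
  then have "4 * (h - h1) * (h - h2) * (h2 - h1) \<le> 0" using X by linarith
  ultimately have "E h * (h2 - h1) \<le> 0" unfolding id by linarith
  then show ?thesis using d by (simp add: mult_le_0_iff)
qed

text \<open>This is where the hypothesis A < c max(c, 2 sqrt b) enters: K0 = 2 b works when A1 < c^2,
  and K0 = 2 b + A1 when A1 < 2 c sqrt b.\<close>
lemma exists_weight_discriminant_neg: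
  fixes c b A1 :: real
  assumes c: "c > 0" and b: "b > 0" and A1: "0 \<le> A1" "A1 < c * max c (2 * sqrt b)"
  obtains K0 where "K0 > 0" "(K0 - 2 * b)\<^sup>2 < 4 * c\<^sup>2 * b" "(K0 - 2 * (b + A1))\<^sup>2 < 4 * c\<^sup>2 * (b + A1)"
proof -
  have "\<exists>K0. K0 > 0 \<and> 4 * c\<^sup>2 * b - (K0 - 2 * b)\<^sup>2 > 0 \<and>
              4 * c\<^sup>2 * (b + A1) - (K0 - 2 * (b + A1))\<^sup>2 > 0"
  proof (cases "A1 < c * c")
    case True
    have "A1 * A1 \<le> c * c * A1" using True A1 by (simp add: mult_right_mono)
    have e: "(2 * b - 2 * (b + A1))\<^sup>2 = 4 * (A1 * A1)" by (simp add: power2_eq_square algebra_simps)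
    have "c\<^sup>2 * b > 0" using c b by simp
    moreover have "c\<^sup>2 * (b + A1) = c\<^sup>2 * b + c * c * A1" by (simp add: power2_eq_square algebra_simps)
    ultimately have "4 * c\<^sup>2 * (b + A1) - (2 * b - 2 * (b + A1))\<^sup>2 > 0"
      using \<open>A1 * A1 \<le> c * c * A1\<close> unfolding e by linarith
    then show ?thesis using b c by (intro exI[of _ "2 * b"]) auto
  next
    case False
    then have "A1 < c * (2 * sqrt b)" using A1 by (auto simp: max_def split: if_splits)
    then have "A1\<^sup>2 < (c * (2 * sqrt b))\<^sup>2" using A1 by (intro power_strict_mono) auto
    also have "\<dots> = 4 * c\<^sup>2 * b" using b by (simp add: power_mult_distrib)
    finally have lt: "A1\<^sup>2 < 4 * c\<^sup>2 * b" .
    have "0 \<le> 4 * c\<^sup>2 * A1" using A1 by simp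
    moreover have "(2 * b + A1 - 2 * b)\<^sup>2 = A1\<^sup>2" "(2 * b + A1 - 2 * (b + A1))\<^sup>2 = A1\<^sup>2"
      by (simp_all add: power2_eq_square algebra_simps)
    moreover have "4 * c\<^sup>2 * (b + A1) = 4 * c\<^sup>2 * b + 4 * c\<^sup>2 * A1" by (simp add: algebra_simps)
    ultimately have "4 * c\<^sup>2 * b - (2 * b + A1 - 2 * b)\<^sup>2 > 0"
      "4 * c\<^sup>2 * (b + A1) - (2 * b + A1 - 2 * (b + A1))\<^sup>2 > 0" using lt by linarith+
    then show ?thesis using b A1 by (intro exI[of _ "2 * b + A1"]) auto
  qed
  then show ?thesis using that by auto
qed

lemma shifted_discriminant_nonpos:
  fixes K0 c \<gamma> h :: real
  assumes "c > 0" "h > 0" "\<gamma> > 0" "\<gamma> \<le> (4 * c\<^sup>2 * h - (K0 - 2 * h)\<^sup>2) / (8 * c * (1 + h))"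
  shows "(K0 - 2 * h)\<^sup>2 - 4 * (c - \<gamma>) * (c * h - \<gamma>) \<le> 0"
proof -
  have pos: "8 * c * (1 + h) > 0" using assms by simp
  then have "\<gamma> * (8 * c * (1 + h)) \<le> 4 * c\<^sup>2 * h - (K0 - 2 * h)\<^sup>2" using assms(4) by (simp add: field_simps)
  moreover have "\<gamma> * (8 * c * (1 + h)) = 2 * (4 * \<gamma> * c * (1 + h))" by (simp add: algebra_simps)
  moreover have "0 < \<gamma> * (8 * c * (1 + h))" using assms(3) pos by simp
  moreover have "(K0 - 2 * h)\<^sup>2 - 4 * (c - \<gamma>) * (c * h - \<gamma>)
      = (K0 - 2 * h)\<^sup>2 - 4 * c\<^sup>2 * h + 4 * \<gamma> * c * (1 + h) - 4 * \<gamma>\<^sup>2"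
    by (simp add: power2_eq_square algebra_simps)
  ultimately show ?thesis using zero_le_power2[of \<gamma>] by linarith
qed

text \<open>The discriminant of the form in (p, w) is convex in h, so it is negative on [b, b + A1] once it is
  negative at the endpoints.\<close>
lemma damped_form_uniformly_positive:
  fixes c b A1 :: real
  assumes c: "c > 0" and b: "b > 0" and A1: "0 \<le> A1" "A1 < c * max c (2 * sqrt b)"
  obtains K0 \<gamma> where "K0 > 0" "\<gamma> > 0" "\<And>p w h. b \<le> h \<Longrightarrow> h \<le> b + A1 \<Longrightarrow>
            \<gamma> * (p\<^sup>2 + w\<^sup>2) \<le> c * p\<^sup>2 - (K0 - 2 * h) * p * w + c * h * w\<^sup>2"
proof -
  obtain K0 where K0: "K0 > 0" and "(K0 - 2 * b)\<^sup>2 < 4 * c\<^sup>2 * b"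
    and "(K0 - 2 * (b + A1))\<^sup>2 < 4 * c\<^sup>2 * (b + A1)"
    using exists_weight_discriminant_neg[OF c b A1] by blast
  then have "4 * c\<^sup>2 * b - (K0 - 2 * b)\<^sup>2 > 0" "4 * c\<^sup>2 * (b + A1) - (K0 - 2 * (b + A1))\<^sup>2 > 0"
    by simp_all
  moreover define \<gamma> where "\<gamma> = min (c/2) (min
      ((4 * c\<^sup>2 * b - (K0 - 2 * b)\<^sup>2) / (8 * c * (1 + b)))
      ((4 * c\<^sup>2 * (b + A1) - (K0 - 2 * (b + A1))\<^sup>2) / (8 * c * (1 + (b + A1)))))"
  ultimately have \<gamma>: "\<gamma> > 0" using c b A1 by simp
  have E1: "(K0 - 2 * b)\<^sup>2 - 4 * (c - \<gamma>) * (c * b - \<gamma>) \<le> 0"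
    by (rule shifted_discriminant_nonpos[OF c b \<gamma>]) (simp add: \<gamma>_def)
  have E2: "(K0 - 2 * (b + A1))\<^sup>2 - 4 * (c - \<gamma>) * (c * (b + A1) - \<gamma>) \<le> 0"
    by (rule shifted_discriminant_nonpos[OF c _ \<gamma>]) (use b A1 in \<open>simp_all add: \<gamma>_def\<close>)
  have "\<gamma> * (p\<^sup>2 + w\<^sup>2) \<le> c * p\<^sup>2 - (K0 - 2 * h) * p * w + c * h * w\<^sup>2"
    if h: "b \<le> h" "h \<le> b + A1" for p w h
  proof -
    have "(K0 - 2 * h)\<^sup>2 - 4 * (c - \<gamma>) * (c * h - \<gamma>) \<le> 0"
      using discriminant_nonpos_between[of b h "b + A1" K0 c \<gamma>] h E1 E2 by blast
    then have "(- (K0 - 2 * h))\<^sup>2 \<le> 4 * (c - \<gamma>) * (c * h - \<gamma>)" by (simp only: power2_minus)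
    moreover have "\<gamma> \<le> c / 2" unfolding \<gamma>_def by (rule min.cobounded1)
    then have "c - \<gamma> > 0" using c by (simp add: field_simps)
    ultimately have "0 \<le> (c - \<gamma>) * p\<^sup>2 + - (K0 - 2 * h) * p * w + (c * h - \<gamma>) * w\<^sup>2"
      by (rule quadratic_form_nonneg[rotated])
    then show ?thesis by (simp add: algebra_simps)
  qed
  then show ?thesis using that K0 \<gamma> by blast
qed

lemma positive_quadratic_form_bounds:
  fixes c \<beta> :: real
  assumes "c\<^sup>2 < 4 * \<beta>"
  obtains q where "q > 0" "\<And>p w. q * (p\<^sup>2 + w\<^sup>2) \<le> p\<^sup>2 + c * p * w + \<beta> * w\<^sup>2"
    "\<And>p w. p\<^sup>2 + c * p * w + \<beta> * w\<^sup>2 \<le> (1 + \<bar>c\<bar> + \<beta>) * (p\<^sup>2 + w\<^sup>2)"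
proof
  define q where "q = min (1/2) ((\<beta> - c\<^sup>2/4) / (1 + \<beta>))"
  have \<beta>: "\<beta> - c\<^sup>2/4 > 0" "1 + \<beta> > 0" using assms zero_le_power2[of c] by linarith+
  then show "q > 0" by (simp add: q_def)
  have "q \<le> (\<beta> - c\<^sup>2/4) / (1 + \<beta>)" unfolding q_def by (rule min.cobounded2)
  then have "q * (1 + \<beta>) \<le> \<beta> - c\<^sup>2/4" using \<beta> by (simp add: field_simps)
  moreover have "4 * (1 - q) * (\<beta> - q) = 4 * \<beta> - 4 * (q * (1 + \<beta>)) + 4 * q\<^sup>2"
    by (simp add: algebra_simps power2_eq_square)
  ultimately have "c\<^sup>2 \<le> 4 * (1 - q) * (\<beta> - q)" using zero_le_power2[of q] by linarith
  moreover have "q \<le> 1/2" unfolding q_def by (rule min.cobounded1)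
  ultimately have nonneg: "0 \<le> (1 - q) * p\<^sup>2 + c * p * w + (\<beta> - q) * w\<^sup>2" for p w
    by (intro quadratic_form_nonneg) auto
  show "q * (p\<^sup>2 + w\<^sup>2) \<le> p\<^sup>2 + c * p * w + \<beta> * w\<^sup>2" for p w
    using nonneg[of p w] by (simp add: algebra_simps)
  fix p w :: real
  have "2 * \<bar>p * w\<bar> \<le> p\<^sup>2 + w\<^sup>2"
    using zero_le_power2[of "\<bar>p\<bar> - \<bar>w\<bar>"] by (simp add: power2_eq_square abs_mult algebra_simps)
  then have "\<bar>p * w\<bar> \<le> p\<^sup>2 + w\<^sup>2" using abs_ge_zero[of "p * w"] by linarith
  have "c * (p * w) \<le> \<bar>c\<bar> * \<bar>p * w\<bar>" by (metis abs_ge_self abs_mult)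
  also have "\<dots> \<le> \<bar>c\<bar> * (p\<^sup>2 + w\<^sup>2)" by (rule mult_left_mono) (fact, simp)
  finally have "c * p * w \<le> \<bar>c\<bar> * (p\<^sup>2 + w\<^sup>2)" by (simp add: mult.assoc)
  moreover have "\<beta> \<ge> 0" using assms zero_le_power2[of c] by linarith
  then have "\<beta> * w\<^sup>2 \<le> \<beta> * (p\<^sup>2 + w\<^sup>2)" by (intro mult_left_mono) auto
  moreover have "(1 + \<bar>c\<bar> + \<beta>) * (p\<^sup>2 + w\<^sup>2) = p\<^sup>2 + w\<^sup>2 + \<bar>c\<bar> * (p\<^sup>2 + w\<^sup>2) + \<beta> * (p\<^sup>2 + w\<^sup>2)"
    by (simp add: algebra_simps)
  ultimately show "p\<^sup>2 + c * p * w + \<beta> * w\<^sup>2 \<le> (1 + \<bar>c\<bar> + \<beta>) * (p\<^sup>2 + w\<^sup>2)"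
    using zero_le_power2[of w] by linarith
qed

lemma sum_abs_le_of_sum_squares_le_exp:
  fixes p w q Z \<kappa> t :: real
  assumes "q > 0" "q * (p\<^sup>2 + w\<^sup>2) \<le> Z * exp (- \<kappa> * t)"
  shows "\<bar>p\<bar> + \<bar>w\<bar> \<le> sqrt (2 * Z / q) * exp (- (\<kappa> / 2) * t)"
proof -
  have "(\<bar>p\<bar> + \<bar>w\<bar>)\<^sup>2 \<le> 2 * (p\<^sup>2 + w\<^sup>2)"
    using zero_le_power2[of "\<bar>p\<bar> - \<bar>w\<bar>"] by (simp add: power2_eq_square algebra_simps)
  also have "\<dots> \<le> 2 * Z / q * exp (- \<kappa> * t)" using assms by (simp add: field_simps)
  also have "\<dots> = 2 * Z / q * (exp (- (\<kappa> / 2) * t))\<^sup>2" by (simp flip: exp_double)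
  finally have "\<bar>p\<bar> + \<bar>w\<bar> \<le> sqrt (2 * Z / q * (exp (- (\<kappa> / 2) * t))\<^sup>2)" by (rule real_le_rsqrt)
  then show ?thesis by (simp only: real_sqrt_mult real_sqrt_abs abs_of_pos[OF exp_gt_zero])
qed

subsection \<open>Exponential decay of the difference of two solutions\<close>

lemma lipschitzian_exponential_decay:
  fixes Q :: "real \<Rightarrow> real"
  assumes \<kappa>: "\<kappa> > 0" and lip: "lipschitzian {T..t} Q" and N: "negligible N" and t: "T \<le> t"
    and der: "\<And>s. s \<in> {T<..<t} \<Longrightarrow> s \<notin> N \<Longrightarrow> Q s > 0 \<Longrightarrow>
                \<exists>D. (Q has_real_derivative D) (at s) \<and> D < - \<kappa> * Q s"
  shows "Q t \<le> max (Q T) 0 * exp (\<kappa> * (T - t))"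
proof -
  define \<phi> where "\<phi> s = exp (\<kappa> * s) * Q s" for s
  have "\<phi> t \<le> max (\<phi> T) 0"
  proof (rule lipschitzian_le_max_of_derivative_neg[OF t _ N])
    show "lipschitzian {T..t} \<phi>"
      unfolding \<phi>_def
      by (intro lipschitzian_mult lip bounded_closed_interval
          lipschitzian_compose_C1[OF _ _ DERIV_exp continuous_on_exp[OF continuous_on_id]]
          lipschitzian_const lipschitzian_ident)
    fix s assume s: "s \<in> {T<..<t}" "s \<notin> N" "0 < \<phi> s"
    then have "Q s > 0" by (simp add: \<phi>_def zero_less_mult_iff)
    then obtain D where D: "(Q has_real_derivative D) (at s)" "D < - \<kappa> * Q s" using der s by blast
    have "(\<phi> has_real_derivative exp (\<kappa> * s) * (\<kappa> * Q s + D)) (at s)"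
      unfolding \<phi>_def by (rule derivative_eq_intros D(1) refl)+ (simp add: algebra_simps)
    moreover have "exp (\<kappa> * s) * (\<kappa> * Q s + D) < 0"
      using D(2) \<kappa> \<open>Q s > 0\<close> by (simp add: mult_pos_neg)
    ultimately show "\<exists>D<0. (\<phi> has_real_derivative D) (at s)" by blast
  qed
  moreover have "max (\<phi> T) 0 = exp (\<kappa> * T) * max (Q T) 0"
    unfolding \<phi>_def by (simp add: max_mult_distrib_left)
  ultimately have "exp (\<kappa> * t) * Q t \<le> exp (\<kappa> * T) * max (Q T) 0"
    by (simp add: \<phi>_def)
  then show ?thesis
    by (simp add: exp_diff field_simps)
qed

lemma neg_less_of_coercive_bounds:
  fixes \<gamma> C X Q D :: real
  assumes "\<gamma> > 0" "C > 0" "\<gamma> * X \<le> D" "Q \<le> C * X" "Q > 0"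
  shows "- D < - (\<gamma> / (2 * C)) * Q"
proof -
  have "0 < C * X" using assms(4,5) by linarith
  then have X: "X > 0" using assms(2) by (simp add: zero_less_mult_iff)
  have "\<gamma> / (2 * C) * Q \<le> \<gamma> / (2 * C) * (C * X)"
    using assms by (intro mult_left_mono) auto
  also have "\<dots> = \<gamma> / 2 * X" using assms(2) by simp
  also have "\<dots> < \<gamma> * X" using X assms(1) by simp
  finally show ?thesis using assms(3) by simp
qed

lemma solution_difference_form_lipschitzian:
  assumes solu: "is_solution c g f t0 u u'" and solv: "is_solution c g f t0 v v'"
  shows "lipschitzian {t0..T} (\<lambda>t. (u' t - v' t)\<^sup>2 + c * (u' t - v' t) * (u t - v t) + \<beta> * (u t - v t)\<^sup>2)"
  unfolding power2_eq_square
  by (intro lipschitzian_add lipschitzian_mult lipschitzian_diff lipschitzian_const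
      bounded_closed_interval solution_lipschitzian[OF solu] solution_lipschitzian[OF solv]
      solution_lipschitzian_derivative[OF solu] solution_lipschitzian_derivative[OF solv])

lemma difference_form_has_derivative:
  assumes u: "(u has_real_derivative u' t) (at t)"
    and u': "(u' has_real_derivative f t - c * u' t - g (u t)) (at t)"
    and v: "(v has_real_derivative v' t) (at t)"
    and v': "(v' has_real_derivative f t - c * v' t - g (v t)) (at t)"
    and h: "g (u t) - g (v t) = h * (u t - v t)"
  shows "((\<lambda>t. (u' t - v' t)\<^sup>2 + c * (u' t - v' t) * (u t - v t) + (K0 + c\<^sup>2) / 2 * (u t - v t)\<^sup>2)
    has_real_derivative
      - (c * (u' t - v' t)\<^sup>2 - (K0 - 2 * h) * (u' t - v' t) * (u t - v t) + c * h * (u t - v t)\<^sup>2)) (at t)"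
proof -
  have "((\<lambda>t. (u' t - v' t)\<^sup>2 + c * (u' t - v' t) * (u t - v t) + (K0 + c\<^sup>2) / 2 * (u t - v t)\<^sup>2)
    has_real_derivative - c * (u' t - v' t)\<^sup>2 + K0 * (u' t - v' t) * (u t - v t)
      - (2 * (u' t - v' t) + c * (u t - v t)) * (g (u t) - g (v t))) (at t)"
    by (rule derivative_eq_intros u u' v v' refl)+ (simp add: field_simps power2_eq_square)
  then show ?thesis by (rule DERIV_cong) (simp add: h algebra_simps power2_eq_square)
qed

lemma difference_form_exponential_decay:
  fixes c b t0 T A1 K0 \<gamma> C :: real and f g u u' v v' :: "real \<Rightarrow> real"
  assumes solu: "is_solution c g f t0 u u'" and solv: "is_solution c g f t0 v v'" and T: "t0 \<le> T"
    and slope: "\<And>t. t \<ge> T \<Longrightarrow> \<exists>h. b \<le> h \<and> h \<le> b + A1 \<and> g (u t) - g (v t) = h * (u t - v t)"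
    and \<gamma>: "\<gamma> > 0" and form: "\<And>p w h. b \<le> h \<Longrightarrow> h \<le> b + A1 \<Longrightarrow>
      \<gamma> * (p\<^sup>2 + w\<^sup>2) \<le> c * p\<^sup>2 - (K0 - 2 * h) * p * w + c * h * w\<^sup>2"
    and C: "C > 0" and upper: "\<And>p w. p\<^sup>2 + c * p * w + (K0 + c\<^sup>2) / 2 * w\<^sup>2 \<le> C * (p\<^sup>2 + w\<^sup>2)"
    and t: "T \<le> t"
  defines "Q \<equiv> \<lambda>t. (u' t - v' t)\<^sup>2 + c * (u' t - v' t) * (u t - v t) + (K0 + c\<^sup>2) / 2 * (u t - v t)\<^sup>2"
  shows "Q t \<le> max (Q T) 0 * exp (\<gamma> / (2 * C) * (T - t))"
proof -
  obtain Nu where Nu: "negligible Nu"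
    "\<And>t. t > t0 \<Longrightarrow> t \<notin> Nu \<Longrightarrow> (u' has_real_derivative f t - c * u' t - g (u t)) (at t)"
    using solution_second_derivative[OF solu] by blast
  obtain Nv where Nv: "negligible Nv"
    "\<And>t. t > t0 \<Longrightarrow> t \<notin> Nv \<Longrightarrow> (v' has_real_derivative f t - c * v' t - g (v t)) (at t)"
    using solution_second_derivative[OF solv] by blast
  show ?thesis
  proof (rule lipschitzian_exponential_decay[OF _ _ negligible_Un[OF Nu(1) Nv(1)] t])
    show "\<gamma> / (2 * C) > 0" using \<gamma> C by simp
    have "lipschitzian {t0..t} Q"
      unfolding Q_def by (rule solution_difference_form_lipschitzian[OF solu solv])
    then show "lipschitzian {T..t} Q" by (rule lipschitzian_subset) (use T in auto)
    fix s assume s: "s \<in> {T<..<t}" "s \<notin> Nu \<union> Nv" "0 < Q s"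
    define P W where "P = u' s - v' s" and "W = u s - v s"
    obtain h where h: "b \<le> h" "h \<le> b + A1" "g (u s) - g (v s) = h * (u s - v s)"
      using slope[of s] s by auto
    have s': "s > t0" "s \<notin> Nu" "s \<notin> Nv" using s T by auto
    have "(Q has_real_derivative - (c * P\<^sup>2 - (K0 - 2 * h) * P * W + c * h * W\<^sup>2)) (at s)"
      unfolding Q_def P_def W_def
      by (rule difference_form_has_derivative[where u = u and u' = u' and v = v and v' = v' and t = s
            and f = f and g = g and c = c,
            OF solution_has_derivative[OF solu s'(1)] Nu(2)[OF s'(1,2)]
            solution_has_derivative[OF solv s'(1)] Nv(2)[OF s'(1,3)] h(3)])
    moreover have "- (c * P\<^sup>2 - (K0 - 2 * h) * P * W + c * h * W\<^sup>2) < - (\<gamma> / (2 * C)) * Q s"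
      using upper[of P W] s(3) unfolding Q_def P_def W_def
      by (intro neg_less_of_coercive_bounds[OF \<gamma> C form[OF h(1,2)]]) simp_all
    ultimately show "\<exists>D. (Q has_real_derivative D) (at s) \<and> D < - (\<gamma> / (2 * C)) * Q s" by blast
  qed
qed

lemma solution_difference_decay:
  fixes c b t0 T A1 :: real and f g u u' v v' :: "real \<Rightarrow> real"
  assumes c: "c > 0" and b: "b > 0" and A1: "0 \<le> A1" "A1 < c * max c (2 * sqrt b)"
    and solu: "is_solution c g f t0 u u'" and solv: "is_solution c g f t0 v v'" and T: "t0 \<le> T"
    and slope: "\<And>t. t \<ge> T \<Longrightarrow> \<exists>h. b \<le> h \<and> h \<le> b + A1 \<and> g (u t) - g (v t) = h * (u t - v t)"
  obtains \<delta> K where "\<delta> > 0" "\<And>t. t \<ge> T \<Longrightarrow> \<bar>u t - v t\<bar> + \<bar>u' t - v' t\<bar> \<le> K * exp (- \<delta> * t)"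
proof -
  obtain K0 \<gamma> where K0: "K0 > 0" and \<gamma>: "\<gamma> > 0" and form: "\<And>p w h. b \<le> h \<Longrightarrow> h \<le> b + A1 \<Longrightarrow>
      \<gamma> * (p\<^sup>2 + w\<^sup>2) \<le> c * p\<^sup>2 - (K0 - 2 * h) * p * w + c * h * w\<^sup>2"
    using damped_form_uniformly_positive[OF c b A1] by blast
  define C where "C = 1 + \<bar>c\<bar> + (K0 + c\<^sup>2) / 2"
  have "c\<^sup>2 < 4 * ((K0 + c\<^sup>2) / 2)" using K0 by (simp add: field_simps) (simp add: add_pos_nonneg)
  then obtain q where q: "q > 0"
    and lower: "\<And>p w. q * (p\<^sup>2 + w\<^sup>2) \<le> p\<^sup>2 + c * p * w + (K0 + c\<^sup>2) / 2 * w\<^sup>2"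
    and upper: "\<And>p w. p\<^sup>2 + c * p * w + (K0 + c\<^sup>2) / 2 * w\<^sup>2 \<le> C * (p\<^sup>2 + w\<^sup>2)"
    using positive_quadratic_form_bounds unfolding C_def by blast
  have C: "C > 0" using lower[of 1 0] upper[of 1 0] q by simp
  define \<kappa> Q where "\<kappa> = \<gamma> / (2 * C)"
    and "Q t = (u' t - v' t)\<^sup>2 + c * (u' t - v' t) * (u t - v t) + (K0 + c\<^sup>2) / 2 * (u t - v t)\<^sup>2" for t
  define Z where "Z = max (Q T) 0 * exp (\<kappa> * T)"
  show ?thesis
  proof (rule that[of "\<kappa> / 2" "sqrt (2 * Z / q)"])
    show "\<kappa> / 2 > 0" using \<gamma> C by (simp add: \<kappa>_def)
    fix t assume "t \<ge> T"
    then have "Q t \<le> max (Q T) 0 * exp (\<kappa> * (T - t))"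
      using difference_form_exponential_decay[OF solu solv T slope \<gamma> form C upper]
      unfolding \<kappa>_def Q_def by simp
    also have "\<dots> = Z * exp (- \<kappa> * t)"
      by (simp add: Z_def right_diff_distrib exp_diff exp_minus field_simps)
    finally have "q * ((u t - v t)\<^sup>2 + (u' t - v' t)\<^sup>2) \<le> Z * exp (- \<kappa> * t)"
      using lower[of "u' t - v' t" "u t - v t"] unfolding Q_def by (simp add: add.commute)
    then show "\<bar>u t - v t\<bar> + \<bar>u' t - v' t\<bar> \<le> sqrt (2 * Z / q) * exp (- (\<kappa> / 2) * t)"
      by (rule sum_abs_le_of_sum_squares_le_exp[OF q])
  qed
qed

lemma exp_decay_extend_left:
  fixes x :: "real \<Rightarrow> real"
  assumes \<delta>: "\<delta> \<ge> 0" and late: "\<And>t. t \<ge> T \<Longrightarrow> x t \<le> K * exp (- \<delta> * t)"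
    and early: "\<And>t. t0 \<le> t \<Longrightarrow> t \<le> T \<Longrightarrow> x t \<le> B"
  obtains K' where "K' > 0" "\<And>t. t \<ge> t0 \<Longrightarrow> x t \<le> K' * exp (- \<delta> * t)"
proof
  define K' where "K' = max K 0 + max B 0 * exp (\<delta> * T) + 1"
  show "K' > 0" unfolding K'_def by (simp add: add_nonneg_pos)
  fix t assume "t \<ge> t0"
  show "x t \<le> K' * exp (- \<delta> * t)"
  proof (cases "t \<ge> T")
    case True
    have "0 \<le> max B 0 * exp (\<delta> * T)" by simp
    then have "K \<le> K'" unfolding K'_def using max.cobounded1[of K 0] by linarith
    then have "K * exp (- \<delta> * t) \<le> K' * exp (- \<delta> * t)" by (simp add: mult_right_mono)
    then show ?thesis using late[OF True] by linarith
  next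
    case False
    have "x t \<le> max B 0" using early[OF \<open>t \<ge> t0\<close>] False by simp
    also have "\<dots> = max B 0 * exp (\<delta> * T) * exp (- \<delta> * T)" by (simp add: exp_minus)
    also have "\<dots> \<le> max B 0 * exp (\<delta> * T) * exp (- \<delta> * t)"
      using False \<delta> by (intro mult_left_mono) (auto intro: mult_left_mono)
    also have "\<dots> \<le> K' * exp (- \<delta> * t)"
      unfolding K'_def by (intro mult_right_mono) auto
    finally show ?thesis .
  qed
qed

lemma Limsup_abs_bounded:
  fixes u :: "real \<Rightarrow> real"
  assumes "\<And>t. t \<ge> t0 \<Longrightarrow> \<bar>u t\<bar> \<le> B"
  obtains x where "x \<ge> 0" "Limsup at_top (\<lambda>t. ereal \<bar>u t\<bar>) = ereal x"
proof -
  have "eventually (\<lambda>t. ereal \<bar>u t\<bar> \<le> ereal B) at_top"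
    using assms unfolding eventually_at_top_linorder by auto
  then have "Limsup at_top (\<lambda>t. ereal \<bar>u t\<bar>) \<le> ereal B" by (rule Limsup_bounded)
  moreover have "0 \<le> Limsup at_top (\<lambda>t. ereal \<bar>u t\<bar>)" by (rule le_Limsup) auto
  ultimately show ?thesis using that by (cases "Limsup at_top (\<lambda>t. ereal \<bar>u t\<bar>)") auto
qed

lemma eventually_abs_less_of_Limsup_le:
  fixes u :: "real \<Rightarrow> real"
  assumes "Limsup at_top (\<lambda>t. ereal \<bar>u t\<bar>) \<le> ereal M" "e > 0"
  shows "eventually (\<lambda>t. \<bar>u t\<bar> < M + e) at_top"
proof -
  have "Limsup at_top (\<lambda>t. ereal \<bar>u t\<bar>) < ereal (M + e)" using assms by (simp add: le_less_trans)
  from Limsup_lessD[OF this] show ?thesis by simp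
qed

lemma gap_above_SUP:
  fixes g' :: "real \<Rightarrow> real"
  assumes g': "continuous_on UNIV g'" "\<And>s. g' s \<ge> b" and M: "M \<ge> 0"
    and A: "A = (SUP s\<in>{-M..M}. g' s - b)" "A < R"
  obtains A1 where "0 \<le> A1" "A1 < R" "\<And>s. s \<in> {-M..M} \<Longrightarrow> g' s < b + A1"
proof
  have "compact ((\<lambda>s. g' s - b) ` {-M..M})"
    by (intro compact_continuous_image continuous_intros continuous_on_subset[OF g'(1)]) auto
  then have bdd: "bdd_above ((\<lambda>s. g' s - b) ` {-M..M})"
    by (intro bounded_imp_bdd_above compact_imp_bounded)
  have le_A: "g' s - b \<le> A" if "s \<in> {-M..M}" for s
    unfolding A(1) using bdd that by (rule cSUP_upper2) auto
  have "A \<ge> 0" using le_A[of 0] g'(2)[of 0] M by auto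
  then show "0 \<le> (A + R) / 2" "(A + R) / 2 < R" using A(2) by auto
  show "g' s < b + (A + R) / 2" if "s \<in> {-M..M}" for s using le_A[OF that] A(2) by (simp add: field_simps)
qed

lemma eventually_difference_quotient_bounds:
  fixes g g' u v :: "real \<Rightarrow> real"
  assumes g: "\<And>s. (g has_real_derivative g' s) (at s)" "continuous_on UNIV g'" "\<And>s. g' s \<ge> b"
    and M: "M \<ge> 0" "\<And>s. s \<in> {-M..M} \<Longrightarrow> g' s < b + A1"
    and u: "Limsup at_top (\<lambda>t. ereal \<bar>u t\<bar>) \<le> ereal M"
    and v: "Limsup at_top (\<lambda>t. ereal \<bar>v t\<bar>) \<le> ereal M"
  shows "eventually (\<lambda>t. \<exists>h. b \<le> h \<and> h \<le> b + A1 \<and> g (u t) - g (v t) = h * (u t - v t)) at_top"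
proof -
  have "open {s. g' s < b + A1}"
    by (rule open_Collect_less[OF g(2)]) (intro continuous_intros)
  then obtain e where e: "e > 0" "(\<Union>x\<in>{-M..M}. cball x e) \<subseteq> {s. g' s < b + A1}"
    using compact_subset_open_imp_cball_epsilon_subset[OF compact_Icc] M(2) by blast
  have near: "g' s < b + A1" if "\<bar>s\<bar> \<le> M + e" for s
  proof -
    have "max (-M) (min M s) \<in> {-M..M}" "s \<in> cball (max (-M) (min M s)) e"
      using that e(1) M(1) by (auto simp: dist_real_def)
    then show ?thesis using e(2) by blast
  qed
  have "eventually (\<lambda>t. \<bar>u t\<bar> < M + e \<and> \<bar>v t\<bar> < M + e) at_top"
    using eventually_abs_less_of_Limsup_le[OF u e(1)] eventually_abs_less_of_Limsup_le[OF v e(1)]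
    by (rule eventually_conj)
  then show ?thesis
  proof eventually_elim
    case (elim t)
    obtain z where z: "min (u t) (v t) \<le> z" "z \<le> max (u t) (v t)"
      "g (u t) - g (v t) = g' z * (u t - v t)"
      using real_MVT_between[OF g(1)] by blast
    then have "\<bar>z\<bar> \<le> M + e" using elim by auto
    then show ?case using near[of z] g(3)[of z] z(3) by (intro exI[of _ "g' z"]) auto
  qed
qed

theorem theorem3p1:
  fixes c b t0 :: real and f g g' u u' v v' :: "real \<Rightarrow> real"
  assumes "c > 0" "b > 0"
    and "Linf_on {t0..} f"
    and "\<And>s. (g has_real_derivative g' s) (at s)" "continuous_on UNIV g'"
    and "g 0 = 0" "\<And>s. g' s \<ge> b"
    and "is_solution c g f t0 u u'" "is_solution c g f t0 v v'"
    and "M = real_of_ereal (max (Limsup at_top (\<lambda>t. ereal \<bar>u t\<bar>))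
                                (Limsup at_top (\<lambda>t. ereal \<bar>v t\<bar>)))"
    and "A = (SUP s\<in>{-M..M}. g' s - b)"
    and "A < c * max c (2 * sqrt b)"
  shows "\<exists>\<delta>>0. \<exists>K>0. \<forall>t\<ge>t0. \<bar>u t - v t\<bar> + \<bar>u' t - v' t\<bar> \<le> K * exp (- \<delta> * t)"
proof -
  note c = assms(1) and b = assms(2) and g = assms(4,6,7) and solu = assms(8) and solv = assms(9)
  obtain Bu where Bu: "\<And>t. t \<ge> t0 \<Longrightarrow> \<bar>u t\<bar> \<le> Bu \<and> \<bar>u' t\<bar> \<le> Bu"
    using solution_bounded[OF c b assms(3) g solu] by blast
  obtain Bv where Bv: "\<And>t. t \<ge> t0 \<Longrightarrow> \<bar>v t\<bar> \<le> Bv \<and> \<bar>v' t\<bar> \<le> Bv"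
    using solution_bounded[OF c b assms(3) g solv] by blast
  obtain xu xv where xu: "xu \<ge> 0" "Limsup at_top (\<lambda>t. ereal \<bar>u t\<bar>) = ereal xu"
    and xv: "xv \<ge> 0" "Limsup at_top (\<lambda>t. ereal \<bar>v t\<bar>) = ereal xv"
    using Limsup_abs_bounded[of t0 u Bu] Limsup_abs_bounded[of t0 v Bv] Bu Bv by metis
  have M: "M = max xu xv" using assms(10) unfolding xu(2) xv(2) by (simp add: max_def)
  then have M0: "M \<ge> 0" using xu(1) by simp
  obtain A1 where A1: "0 \<le> A1" "A1 < c * max c (2 * sqrt b)" "\<And>s. s \<in> {-M..M} \<Longrightarrow> g' s < b + A1"
    using gap_above_SUP[OF assms(5,7) M0 assms(11,12)] by blast
  have "eventually (\<lambda>t. \<exists>h. b \<le> h \<and> h \<le> b + A1 \<and> g (u t) - g (v t) = h * (u t - v t)) at_top"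
    using M xu xv by (intro eventually_difference_quotient_bounds[OF assms(4,5,7) _ A1(3)]) auto
  then obtain T where T: "T \<ge> t0"
    "\<And>t. t \<ge> T \<Longrightarrow> \<exists>h. b \<le> h \<and> h \<le> b + A1 \<and> g (u t) - g (v t) = h * (u t - v t)"
    unfolding eventually_at_top_linorder by (metis max.cobounded1 max.boundedE)
  obtain \<delta> K where \<delta>: "\<delta> > 0"
    and late: "\<And>t. t \<ge> T \<Longrightarrow> \<bar>u t - v t\<bar> + \<bar>u' t - v' t\<bar> \<le> K * exp (- \<delta> * t)"
    using solution_difference_decay[OF c b A1(1,2) solu solv T] by blast
  have "\<bar>u t - v t\<bar> + \<bar>u' t - v' t\<bar> \<le> (Bu + Bv) + (Bu + Bv)" if "t \<ge> t0" for t
    using Bu[OF that] Bv[OF that] abs_triangle_ineq4[of "u t" "v t"] abs_triangle_ineq4[of "u' t" "v' t"]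
    by linarith
  then obtain K' where "K' > 0" "\<And>t. t \<ge> t0 \<Longrightarrow> \<bar>u t - v t\<bar> + \<bar>u' t - v' t\<bar> \<le> K' * exp (- \<delta> * t)"
    using exp_decay_extend_left[OF less_imp_le[OF \<delta>] late] by blast
  then show ?thesis using \<delta> by blast
qed

end
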